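(* Assume $\mathcal{Z}$ is norm-Euclidean. Then there is a constant $R_2>0$ such that for every digit string $s$ with $n=|s|$ and all $x,y\in C_s$, $d(x,y)\le R_2\,d(T^nx,T^ny)$.
   Context: $X=\mathbb{R}^d$ (including $\mathbb{C},\mathbb{H},\mathbb{O}$ as $\mathbb{R}^2,\mathbb{R}^4,\mathbb{R}^8$) with Euclidean norm and distance $d$. $\iota:X\setminus\{0\}\to X\setminus\{0\}$ satisfies $|\iota x|=1/|x|$, $d(\iota x,\iota y)=d(x,y)/(|x||y|)$ and $\iota\circ\iota=\mathrm{id}$; $\iota(0)=0$. $\mathcal{Z}$ is a discrete additive subgroup with compact quotient, $K=\{x:d(x,0)\le d(x,z)\ \forall z\in\mathcal{Z}\}$ its Dirichlet region with a boundary choice so each $x$ has a unique $[x]\in\mathcal{Z}$ with $x-[x]\in K$; norm-Euclidean means $\sup_{x\in K}|x|<1$. $Tx=\iota x-[\iota x]$ ($x\ne0$), $T0=0$. Cylinders: $C_\emptyset=K$, $C_{as}=K\cap\iota(C_s+a)$ for $a\in\mathcal{Z}$. *)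

theory Defs
  imports "HOL-Analysis.Analysis"
begin

text \<open>Dirichlet region of the lattice Z (closed version, before boundary choice).\<close>
definition dirichlet :: "'a::euclidean_space set \<Rightarrow> 'a set" where
  "dirichlet Z = {x. \<forall>z\<in>Z. dist x 0 \<le> dist x z}"

text \<open>Nearest lattice point [x] with respect to the chosen fundamental domain K.\<close>
definition brk :: "'a::euclidean_space set \<Rightarrow> 'a set \<Rightarrow> 'a \<Rightarrow> 'a" where
  "brk Z K x = (THE z. z \<in> Z \<and> x - z \<in> K)"

definition Tmap :: "('a::euclidean_space \<Rightarrow> 'a) \<Rightarrow> 'a set \<Rightarrow> 'a set \<Rightarrow> 'a \<Rightarrow> 'a" where
  "Tmap iota Z K x = (if x = 0 then 0 else iota x - brk Z K (iota x))"

fun cyl :: "('a::euclidean_space \<Rightarrow> 'a) \<Rightarrow> 'a set \<Rightarrow> 'a list \<Rightarrow> 'a set" where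
  "cyl iota K [] = K"
| "cyl iota K (a # s) = K \<inter> iota ` ((\<lambda>y. y + a) ` cyl iota K s)"

end

theory Submission
  imports Defs
begin

text \<open>With the norm-Euclidean condition one can take \<open>R\<^sub>2 = 1\<close>. A point \<open>x\<close> of \<open>C\<^sub>a\<^sub>s\<close>
  is \<open>\<iota>(u + a)\<close> with \<open>u \<in> C\<^sub>s\<close> and \<open>T x = u\<close>. Since \<open>x\<close> lies in \<open>K\<close>, inside the open unit
  ball, \<open>u + a\<close> lies outside it, and on the complement of the unit ball \<open>\<iota>\<close> is
  1-Lipschitz by \<open>d(\<iota>x, \<iota>y) = d(x, y) / (|x||y|)\<close>. Hence \<open>d(x, y) \<le> d(T x, T y)\<close> for
  \<open>x, y \<in> C\<^sub>a\<^sub>s\<close>, and induction on \<open>s\<close> gives the claim.\<close>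

lemma dirichlet_lattice_point_eq_0:
  assumes "z \<in> Z" "z \<in> dirichlet Z"
  shows "z = 0"
  using assms unfolding dirichlet_def by fastforce

lemma bounded_dirichlet:
  assumes "compact C" "\<forall>x. \<exists>z\<in>Z. x - z \<in> C"
  shows "bounded (dirichlet Z)"
proof -
  obtain B where B: "\<And>c. c \<in> C \<Longrightarrow> norm c \<le> B"
    using compact_imp_bounded[OF assms(1)] bounded_iff by blast
  have "norm x \<le> B" if "x \<in> dirichlet Z" for x
  proof -
    obtain z where "z \<in> Z" "x - z \<in> C" using assms(2) by blast
    then have "dist x 0 \<le> dist x z" using that unfolding dirichlet_def by blast
    with B[OF \<open>x - z \<in> C\<close>] show ?thesis by (simp add: dist_norm)
  qed
  then show ?thesis by (auto simp: bounded_iff)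
qed

lemma norm_less_1_if_SUP_norm_less_1:
  fixes K :: "'a::real_normed_vector set"
  assumes "bounded K" "(SUP x\<in>K. norm x) < 1" "x \<in> K"
  shows "norm x < 1"
proof -
  have "bdd_above (norm ` K)"
    using assms(1) by (auto simp: bounded_iff intro: bdd_aboveI2)
  with assms(2,3) show ?thesis using cSUP_upper by fastforce
qed

lemma brk_eqI:
  assumes "\<exists>!z. z \<in> Z \<and> x - z \<in> K" "a \<in> Z" "x - a \<in> K"
  shows "brk Z K x = a"
  unfolding brk_def using assms by (blast intro: the1_equality)

locale inversion =
  fixes iota :: "'a::euclidean_space \<Rightarrow> 'a"
  assumes iota_norm: "\<And>x. x \<noteq> 0 \<Longrightarrow> norm (iota x) = 1 / norm x"
    and iota_dist: "\<And>x y. x \<noteq> 0 \<Longrightarrow> y \<noteq> 0 \<Longrightarrow>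
                      dist (iota x) (iota y) = dist x y / (norm x * norm y)"
    and iota_inv: "\<And>x. x \<noteq> 0 \<Longrightarrow> iota (iota x) = x"
    and iota_0: "iota 0 = 0"
begin

lemma iota_eq_0_iff [simp]: "iota x = 0 \<longleftrightarrow> x = 0"
  using iota_norm[of x] iota_0 by (cases "x = 0") auto

lemma norm_gt_1_if_norm_iota_less_1:
  assumes "x \<noteq> 0" "norm (iota x) < 1"
  shows "1 < norm x"
  using assms iota_norm[OF assms(1)] by (simp add: divide_less_eq)

lemma dist_iota_le_if_norm_iota_less_1:
  assumes x: "norm (iota x) < 1" and y: "norm (iota y) < 1"
  shows "dist (iota x) (iota y) \<le> dist x y"
proof -
  have zero_case: "dist (iota 0) (iota v) \<le> dist 0 v" if "norm (iota v) < 1" for v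
  proof (cases "v = 0")
    case False
    then have "1 < norm v" using norm_gt_1_if_norm_iota_less_1 that by blast
    with that show ?thesis by (simp add: iota_0)
  qed simp
  consider "x = 0" | "y = 0" | "x \<noteq> 0" "y \<noteq> 0" by blast
  then show ?thesis
  proof cases
    case 1 with zero_case[OF y] show ?thesis by simp
  next
    case 2 with zero_case[OF x] show ?thesis by (simp add: dist_commute)
  next
    case 3
    then have "1 < norm x" "1 < norm y"
      using x y norm_gt_1_if_norm_iota_less_1 by blast+
    then have "1 * 1 \<le> norm x * norm y"
      by (intro mult_mono) auto
    then have "dist x y / (norm x * norm y) \<le> dist x y"
      by (simp add: divide_le_eq mult_le_cancel_left1)
    with iota_dist[OF 3] show ?thesis by simp
  qed
qed

end

locale norm_euclidean_domain = inversion iota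
  for iota :: "'a::euclidean_space \<Rightarrow> 'a" +
  fixes Z K :: "'a set"
  assumes Z_uminus: "\<And>a. a \<in> Z \<Longrightarrow> - a \<in> Z"
    and Z_cocompact: "\<exists>C. compact C \<and> (\<forall>x. \<exists>z\<in>Z. x - z \<in> C)"
    and K_sub: "K \<subseteq> dirichlet Z"
    and K_fund: "\<And>x. \<exists>!z. z \<in> Z \<and> x - z \<in> K"
    and norm_euclidean: "(SUP x\<in>K. norm x) < 1"
begin

abbreviation T :: "'a \<Rightarrow> 'a" where
  "T \<equiv> Tmap iota Z K"

lemma norm_less_1_if_in_K: "x \<in> K \<Longrightarrow> norm x < 1"
proof -
  have "bounded K"
    using Z_cocompact bounded_dirichlet bounded_subset K_sub by metis
  then show "x \<in> K \<Longrightarrow> norm x < 1"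
    using norm_less_1_if_SUP_norm_less_1 norm_euclidean by blast
qed

lemma cyl_subset_K: "cyl iota K s \<subseteq> K"
  by (cases s) auto

lemma T_iota_add:
  assumes "u \<in> K" "a \<in> Z"
  shows "T (iota (u + a)) = u"
proof (cases "u + a = 0")
  case True
  then have "u \<in> Z" using Z_uminus[OF assms(2)] by (simp add: add_eq_0_iff)
  with assms(1) K_sub have "u = 0" using dirichlet_lattice_point_eq_0 by blast
  with True show ?thesis by (simp add: Tmap_def iota_0)
next
  case False
  have "brk Z K (u + a) = a" using brk_eqI[OF K_fund assms(2)] assms(1) by simp
  with False show ?thesis by (simp add: Tmap_def iota_inv)
qed

lemma dist_le_dist_T_funpow:
  assumes "set s \<subseteq> Z" "x \<in> cyl iota K s" "y \<in> cyl iota K s"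
  shows "dist x y \<le> dist ((T ^^ length s) x) ((T ^^ length s) y)"
  using assms
proof (induction s arbitrary: x y)
  case (Cons a s)
  obtain u v where u: "u \<in> cyl iota K s" "x = iota (u + a)" "x \<in> K"
    and v: "v \<in> cyl iota K s" "y = iota (v + a)" "y \<in> K"
    using Cons.prems by auto
  have "a \<in> Z" "u \<in> K" "v \<in> K" using Cons.prems(1) u v cyl_subset_K by auto
  have "dist x y \<le> dist (u + a) (v + a)"
    using dist_iota_le_if_norm_iota_less_1 norm_less_1_if_in_K u(2,3) v(2,3) by blast
  also have "\<dots> = dist u v"
    by (simp add: dist_norm)
  also have "\<dots> \<le> dist ((T ^^ length s) u) ((T ^^ length s) v)"
    using Cons.IH Cons.prems(1) u v by simp
  also have "\<dots> = dist ((T ^^ length (a # s)) x) ((T ^^ length (a # s)) y)"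
    using T_iota_add \<open>a \<in> Z\<close> \<open>u \<in> K\<close> \<open>v \<in> K\<close> u v
    by (simp del: funpow.simps add: funpow_Suc_right)
  finally show ?case .
qed simp

end

theorem lemma4p4:
  fixes iota :: "'a::euclidean_space \<Rightarrow> 'a" and Z K :: "'a set"
  assumes iota_norm: "\<And>x. x \<noteq> 0 \<Longrightarrow> norm (iota x) = 1 / norm x"
    and iota_dist: "\<And>x y. x \<noteq> 0 \<Longrightarrow> y \<noteq> 0 \<Longrightarrow>
                      dist (iota x) (iota y) = dist x y / (norm x * norm y)"
    and iota_inv: "\<And>x. x \<noteq> 0 \<Longrightarrow> iota (iota x) = x"
    and iota_0: "iota 0 = 0"
    and Z_0: "0 \<in> Z"
    and Z_add: "\<And>a b. a \<in> Z \<Longrightarrow> b \<in> Z \<Longrightarrow> a + b \<in> Z"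
    and Z_uminus: "\<And>a. a \<in> Z \<Longrightarrow> - a \<in> Z"
    and Z_discrete: "discrete Z"
    and Z_cocompact: "\<exists>C. compact C \<and> (\<forall>x. \<exists>z\<in>Z. x - z \<in> C)"
    and K_sub: "K \<subseteq> dirichlet Z"
    and K_fund: "\<And>x. \<exists>!z. z \<in> Z \<and> x - z \<in> K"
    and norm_euclidean: "(SUP x\<in>K. norm x) < 1"
  shows "\<exists>R2>0. \<forall>s. set s \<subseteq> Z \<longrightarrow>
           (\<forall>x\<in>cyl iota K s. \<forall>y\<in>cyl iota K s.
              dist x y \<le> R2 * dist ((Tmap iota Z K ^^ length s) x) ((Tmap iota Z K ^^ length s) y))"
proof -
  interpret norm_euclidean_domain iota Z K
    by unfold_locales (fact iota_norm iota_dist iota_inv iota_0 Z_uminus Z_cocompact K_sub K_fund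
        norm_euclidean)+
  show ?thesis
    using dist_le_dist_T_funpow by (intro exI[of _ 1]) simp
qed

end
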